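(* For all $0<q<1$, all integers $n\ge 1$ and $1\le i\le n$, and all $t\ge 1$, if $\pi\sim\mu_{n,q}$ then $$\mathbb{P}(|\pi(i)-i|\ge t)\le 2q^t,$$ and $$c\min\left(\frac{q}{1-q},\,n-1\right)\le \mathbb{E}|\pi(i)-i|\le \min\left(\frac{2q}{1-q},\,n-1\right)$$ for some absolute constant $c>0$. In addition, if $n\ge 3$ and $1\le t\le \frac{n+5}{8}$ then $$\mathbb{P}(|\pi(i)-i|\ge t)\ge \tfrac12 q^{2t-1}.$$
   Context: For $q>0$ and an integer $n\ge1$, the Mallows measure $\mu_{n,q}$ on the symmetric group $S_n$ is defined by $\mu_{n,q}(\pi)=q^{\mathrm{inv}(\pi)}/Z_{n,q}$, where $\mathrm{inv}(\pi)=|\{(i,j): i<j,\ \pi(i)>\pi(j)\}|$ is the number of inversions of $\pi$ and $Z_{n,q}$ is the normalizing constant. *)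

theory Defs
  imports Complex_Main "HOL-Combinatorics.Permutations"
begin

definition inversions :: "nat \<Rightarrow> (nat \<Rightarrow> nat) \<Rightarrow> nat" where
  "inversions n \<pi> = card {(i, j). i \<in> {1..n} \<and> j \<in> {1..n} \<and> i < j \<and> \<pi> i > \<pi> j}"

definition mallows_Z :: "nat \<Rightarrow> real \<Rightarrow> real" where
  "mallows_Z n q = (\<Sum>\<pi> \<in> {\<pi>. \<pi> permutes {1..n}}. q ^ inversions n \<pi>)"

definition mallows :: "nat \<Rightarrow> real \<Rightarrow> (nat \<Rightarrow> nat) \<Rightarrow> real" where
  "mallows n q \<pi> = q ^ inversions n \<pi> / mallows_Z n q"

definition mallows_prob :: "nat \<Rightarrow> real \<Rightarrow> ((nat \<Rightarrow> nat) \<Rightarrow> bool) \<Rightarrow> real" where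
  "mallows_prob n q E = (\<Sum>\<pi> \<in> {\<pi>. \<pi> permutes {1..n} \<and> E \<pi>}. mallows n q \<pi>)"

definition mallows_expect :: "nat \<Rightarrow> real \<Rightarrow> ((nat \<Rightarrow> nat) \<Rightarrow> real) \<Rightarrow> real" where
  "mallows_expect n q X = (\<Sum>\<pi> \<in> {\<pi>. \<pi> permutes {1..n}}. mallows n q \<pi> * X \<pi>)"

end

theory Submission
  imports Defs
begin

text \<open>
  Write \<open>Z\<close> for the Mallows partition function. If \<open>\<pi> i \<ge> i + t\<close>, at least \<open>t\<close> positions
  after \<open>i\<close> carry values smaller than \<open>\<pi> i\<close>. Swapping \<open>i\<close> with the one of them holding the
  largest value removes at least one inversion and exactly one such position, and the
  swapped position can be read off the result, so the weight of permutations with at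
  least \<open>t\<close> of them is at most \<open>q\<^sup>t Z\<close>. The reverse-complement symmetry, which preserves
  inversions, handles \<open>\<pi> i \<le> i - t\<close>.

  For the lower tail, moving the value at \<open>i\<close> up or down by \<open>k = 2t - 1\<close> (shifting the
  values in between by one) changes the number of inversions by at most \<open>k\<close> and maps
  \<open>{|\<pi> i - i| < t}\<close> injectively into \<open>{|\<pi> i - i| \<ge> t}\<close>; hence
  \<open>q\<^sup>k P(|\<pi> i - i| < t) \<le> P(|\<pi> i - i| \<ge> t)\<close>. Both bounds on the expectation follow
  by summing tails; for the lower one, when \<open>q > 3/4\<close>, the sum is cut off at
  \<open>T \<approx> min (1 / (1 - q)) n\<close>, where \<open>q\<^bsup>2T-1\<^esup>\<close> is still at least \<open>1/2\<close>.
\<close>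

definition inversion_set :: "nat \<Rightarrow> (nat \<Rightarrow> nat) \<Rightarrow> (nat \<times> nat) set" where
  "inversion_set n \<pi> = {(a, b). a \<in> {1..n} \<and> b \<in> {1..n} \<and> a < b \<and> \<pi> b < \<pi> a}"

lemma inversions_eq_card: "inversions n \<pi> = card (inversion_set n \<pi>)"
  by (simp add: inversions_def inversion_set_def)

lemma finite_inversion_set [simp]: "finite (inversion_set n \<pi>)"
  by (rule finite_subset[of _ "{1..n} \<times> {1..n}"]) (auto simp: inversion_set_def)

lemma inversions_transpose_less:
  assumes "i < j" "i \<in> {1..n}" "j \<in> {1..n}" "\<pi> j < \<pi> i"
  shows "inversions n (\<pi> \<circ> transpose i j) < inversions n \<pi>"
proof -
  let ?t = "transpose i j"
  define g where "g = (\<lambda>(a, b). if ?t a < ?t b then (?t a, ?t b) else (a, b))"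
  have "inj_on g (inversion_set n (\<pi> \<circ> ?t))"
    by (rule inj_onI) (auto simp: g_def inversion_set_def inj_eq[OF inj_transpose] split: if_splits)
  moreover have "g ` inversion_set n (\<pi> \<circ> ?t) \<subseteq> inversion_set n \<pi> - {(i, j)}"
    using assms by (auto simp: g_def inversion_set_def transpose_def split: if_splits)
  ultimately have "card (inversion_set n (\<pi> \<circ> ?t)) \<le> card (inversion_set n \<pi> - {(i, j)})"
    by (intro card_inj_on_le) auto
  moreover have "card (inversion_set n \<pi> - {(i, j)}) < card (inversion_set n \<pi>)"
    using assms by (intro card_Diff1_less finite_inversion_set) (auto simp: inversion_set_def)
  ultimately show ?thesis
    by (simp add: inversions_eq_card)
qed

definition mallows_weight :: "nat \<Rightarrow> real \<Rightarrow> ((nat \<Rightarrow> nat) \<Rightarrow> bool) \<Rightarrow> real" where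
  "mallows_weight n q E = (\<Sum>\<pi> | \<pi> permutes {1..n} \<and> E \<pi>. q ^ inversions n \<pi>)"

lemma finite_permutes_with [simp]: "finite S \<Longrightarrow> finite {\<pi>. \<pi> permutes S \<and> E \<pi>}"
  by (rule finite_subset[OF _ finite_permutations]) auto

lemma mallows_weight_nonneg: "0 \<le> q \<Longrightarrow> 0 \<le> mallows_weight n q E"
  unfolding mallows_weight_def by (intro sum_nonneg) auto

lemma mallows_weight_pos: "0 < q \<Longrightarrow> 0 < mallows_weight n q (\<lambda>_. True)"
  unfolding mallows_weight_def
  by (intro sum_pos2[where i = id]) (auto simp: permutes_id finite_permutations)

lemma mallows_weight_mono:
  assumes "0 \<le> q" "\<And>\<pi>. \<pi> permutes {1..n} \<Longrightarrow> E \<pi> \<Longrightarrow> F \<pi>"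
  shows "mallows_weight n q E \<le> mallows_weight n q F"
  unfolding mallows_weight_def using assms by (intro sum_mono2) auto

lemma mallows_weight_cong:
  "(\<And>\<pi>. \<pi> permutes {1..n} \<Longrightarrow> E \<pi> = F \<pi>) \<Longrightarrow> mallows_weight n q E = mallows_weight n q F"
  unfolding mallows_weight_def by (rule sum.cong) auto

lemma mallows_weight_split:
  "mallows_weight n q E = mallows_weight n q (\<lambda>\<pi>. E \<pi> \<and> F \<pi>) + mallows_weight n q (\<lambda>\<pi>. E \<pi> \<and> \<not> F \<pi>)"
  unfolding mallows_weight_def
  by (subst sum.union_disjoint[symmetric]) (auto intro!: sum.cong)

lemma mallows_Z_eq_weight: "mallows_Z n q = mallows_weight n q (\<lambda>_. True)"
  by (simp add: mallows_Z_def mallows_weight_def)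

lemma mallows_prob_eq_weight: "mallows_prob n q E = mallows_weight n q E / mallows_Z n q"
  by (simp add: mallows_prob_def mallows_def mallows_weight_def sum_divide_distrib)

lemma mallows_weight_le_by_injection:
  assumes q: "0 < q" "q \<le> 1"
    and maps: "\<And>\<pi>. \<pi> permutes {1..n} \<Longrightarrow> E \<pi> \<Longrightarrow> f \<pi> permutes {1..n} \<and> F (f \<pi>)"
    and inj: "inj_on f {\<pi>. \<pi> permutes {1..n} \<and> E \<pi>}"
    and cost: "\<And>\<pi>. \<pi> permutes {1..n} \<Longrightarrow> E \<pi> \<Longrightarrow> inversions n (f \<pi>) + a \<le> inversions n \<pi> + b"
  shows "q ^ b * mallows_weight n q E \<le> q ^ a * mallows_weight n q F"
proof -
  let ?A = "{\<pi>. \<pi> permutes {1..n} \<and> E \<pi>}"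
  have "q ^ b * mallows_weight n q E = (\<Sum>\<pi>\<in>?A. q ^ (inversions n \<pi> + b))"
    by (simp add: mallows_weight_def sum_distrib_left power_add mult.commute)
  also have "\<dots> \<le> (\<Sum>\<pi>\<in>?A. q ^ (inversions n (f \<pi>) + a))"
    using cost q by (intro sum_mono power_decreasing) auto
  also have "\<dots> = q ^ a * (\<Sum>\<pi>\<in>f ` ?A. q ^ inversions n \<pi>)"
    using inj by (simp add: sum.reindex sum_distrib_left power_add mult.commute)
  also have "\<dots> \<le> q ^ a * mallows_weight n q F"
    unfolding mallows_weight_def using q maps by (intro mult_left_mono sum_mono2) auto
  finally show ?thesis .
qed

definition later_smaller :: "nat \<Rightarrow> nat \<Rightarrow> (nat \<Rightarrow> nat) \<Rightarrow> nat set" where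
  "later_smaller n i \<pi> = {j. i < j \<and> j \<le> n \<and> \<pi> j < \<pi> i}"

lemma finite_later_smaller [simp]: "finite (later_smaller n i \<pi>)"
  by (rule finite_subset[of _ "{..n}"]) (auto simp: later_smaller_def)

lemma le_card_later_smaller:
  assumes p: "\<pi> permutes {1..n}" and i: "i \<in> {1..n}"
  shows "\<pi> i \<le> i + card (later_smaller n i \<pi>)"
proof -
  let ?A = "{k \<in> {1..n}. \<pi> k < \<pi> i}"
  have "\<pi> ` ?A = {1..<\<pi> i}"
  proof (intro equalityI subsetI)
    fix v assume v: "v \<in> {1..<\<pi> i}"
    then have "v \<in> \<pi> ` {1..n}"
      using permutes_image[OF p] permutes_in_image[OF p, of i] i by auto
    then show "v \<in> \<pi> ` ?A" using v by auto
  qed (use permutes_in_image[OF p] in auto)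
  then have "\<pi> i - 1 = card ?A"
    using card_image[OF permutes_inj_on[OF p]] by (metis card_atLeastLessThan)
  also have "\<dots> \<le> card ({1..<i} \<union> later_smaller n i \<pi>)"
    by (intro card_mono) (auto simp: later_smaller_def, metis less_irrefl linorder_neqE_nat)
  also have "\<dots> \<le> (i - 1) + card (later_smaller n i \<pi>)"
    using card_Un_le[of "{1..<i}"] by simp
  finally show ?thesis
    using i permutes_in_image[OF p, of i] by auto
qed

definition swap_partner :: "nat \<Rightarrow> nat \<Rightarrow> (nat \<Rightarrow> nat) \<Rightarrow> nat" where
  "swap_partner n i \<pi> = arg_max \<pi> (\<lambda>j. j \<in> later_smaller n i \<pi>)"

lemma swap_partner:
  assumes "later_smaller n i \<pi> \<noteq> {}"
  shows swap_partner_in: "swap_partner n i \<pi> \<in> later_smaller n i \<pi>"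
    and swap_partner_max: "k \<in> later_smaller n i \<pi> \<Longrightarrow> \<pi> k \<le> \<pi> (swap_partner n i \<pi>)"
proof -
  obtain j where "j \<in> later_smaller n i \<pi>"
    using assms by blast
  moreover have "\<forall>k. k \<in> later_smaller n i \<pi> \<longrightarrow> \<pi> k < \<pi> i"
    by (simp add: later_smaller_def)
  ultimately show "swap_partner n i \<pi> \<in> later_smaller n i \<pi>"
    and "k \<in> later_smaller n i \<pi> \<Longrightarrow> \<pi> k \<le> \<pi> (swap_partner n i \<pi>)"
    using arg_max_nat_lemma[of "\<lambda>j. j \<in> later_smaller n i \<pi>" j \<pi> "\<pi> i"]
    unfolding swap_partner_def by simp_all
qed

definition swap_down :: "nat \<Rightarrow> nat \<Rightarrow> (nat \<Rightarrow> nat) \<Rightarrow> (nat \<Rightarrow> nat)" where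
  "swap_down n i \<pi> = \<pi> \<circ> transpose i (swap_partner n i \<pi>)"

lemma swap_down_apply:
  "swap_down n i \<pi> k =
    (if k = i then \<pi> (swap_partner n i \<pi>) else if k = swap_partner n i \<pi> then \<pi> i else \<pi> k)"
  by (simp add: swap_down_def transpose_def)

context
  fixes n i :: nat and \<pi> :: "nat \<Rightarrow> nat"
  assumes p: "\<pi> permutes {1..n}" and i: "i \<in> {1..n}" and ne: "later_smaller n i \<pi> \<noteq> {}"
begin

private lemma swap_partner_bounds: "i < swap_partner n i \<pi>" "swap_partner n i \<pi> \<le> n"
    "\<pi> (swap_partner n i \<pi>) < \<pi> i"
  using swap_partner_in[OF ne] by (auto simp: later_smaller_def)

lemma swap_down_permutes: "swap_down n i \<pi> permutes {1..n}"
  unfolding swap_down_def using i swap_partner_bounds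
  by (intro permutes_compose[OF _ p] permutes_swap_id) auto

lemma inversions_swap_down: "inversions n (swap_down n i \<pi>) < inversions n \<pi>"
  unfolding swap_down_def using i swap_partner_bounds by (intro inversions_transpose_less) auto

lemma later_smaller_swap_down:
  "later_smaller n i (swap_down n i \<pi>) = later_smaller n i \<pi> - {swap_partner n i \<pi>}"
proof -
  let ?j = "swap_partner n i \<pi>"
  have "\<pi> k < \<pi> ?j \<longleftrightarrow> \<pi> k < \<pi> i" if "k \<noteq> ?j" "k \<in> later_smaller n i \<pi> \<or> \<pi> k < \<pi> ?j" for k
    using that swap_partner_bounds swap_partner_max[OF ne, of k] inj_eq[OF permutes_inj[OF p], of k ?j]
    by (auto simp: later_smaller_def)
  then show ?thesis
    using swap_partner_bounds by (auto simp: later_smaller_def swap_down_apply)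
qed

lemma swap_down_partner_least:
  assumes "i < k" "k \<le> n" "swap_down n i \<pi> i < swap_down n i \<pi> k"
  shows "swap_down n i \<pi> (swap_partner n i \<pi>) \<le> swap_down n i \<pi> k"
proof (cases "k = swap_partner n i \<pi>")
  case False
  then have "\<not> \<pi> k < \<pi> i"
    using assms swap_partner_max[OF ne, of k] by (auto simp: later_smaller_def swap_down_apply)
  then show ?thesis
    using False assms by (auto simp: swap_down_apply)
qed simp

end

lemma inj_on_swap_down:
  assumes i: "i \<in> {1..n}"
  shows "inj_on (swap_down n i) {\<pi>. \<pi> permutes {1..n} \<and> later_smaller n i \<pi> \<noteq> {}}"
proof (rule inj_onI, clarify)
  fix \<pi>1 \<pi>2 assume p1: "\<pi>1 permutes {1..n}" "later_smaller n i \<pi>1 \<noteq> {}"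
    and p2: "\<pi>2 permutes {1..n}" "later_smaller n i \<pi>2 \<noteq> {}"
    and eq: "swap_down n i \<pi>1 = swap_down n i \<pi>2"
  let ?\<sigma> = "swap_down n i \<pi>1" and ?j1 = "swap_partner n i \<pi>1" and ?j2 = "swap_partner n i \<pi>2"
  have j1: "i < ?j1" "?j1 \<le> n" "?\<sigma> i < ?\<sigma> ?j1"
    using swap_partner_in[OF p1(2)] by (auto simp: later_smaller_def swap_down_apply)
  have j2: "i < ?j2" "?j2 \<le> n" "?\<sigma> i < ?\<sigma> ?j2"
    unfolding eq using swap_partner_in[OF p2(2)] by (auto simp: later_smaller_def swap_down_apply)
  have "?\<sigma> ?j1 = ?\<sigma> ?j2"
    using swap_down_partner_least[OF p1(1) i p1(2), of ?j2] swap_down_partner_least[OF p2(1) i p2(2), of ?j1]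
      j1 j2 eq by fastforce
  then have "?j1 = ?j2"
    using inj_eq[OF permutes_inj[OF swap_down_permutes[OF p1(1) i p1(2)]]] by blast
  then show "\<pi>1 = \<pi>2"
    using eq unfolding swap_down_def by (metis comp_id transpose_comp_involutory comp_assoc)
qed

lemma mallows_weight_later_smaller:
  assumes q: "0 < q" "q \<le> 1" and i: "i \<in> {1..n}"
  shows "mallows_weight n q (\<lambda>\<pi>. t \<le> card (later_smaller n i \<pi>)) \<le> q ^ t * mallows_Z n q"
proof (induction t)
  case 0
  then show ?case
    by (simp add: mallows_Z_eq_weight)
next
  case (Suc t)
  have "q ^ 0 * mallows_weight n q (\<lambda>\<pi>. Suc t \<le> card (later_smaller n i \<pi>))
      \<le> q ^ 1 * mallows_weight n q (\<lambda>\<pi>. t \<le> card (later_smaller n i \<pi>))"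
  proof (rule mallows_weight_le_by_injection[OF q])
    fix \<pi> assume p: "\<pi> permutes {1..n}" and t: "Suc t \<le> card (later_smaller n i \<pi>)"
    then have ne: "later_smaller n i \<pi> \<noteq> {}"
      by auto
    show "swap_down n i \<pi> permutes {1..n} \<and> t \<le> card (later_smaller n i (swap_down n i \<pi>))"
      using t swap_partner_in[OF ne] swap_down_permutes[OF p i ne]
      by (simp add: later_smaller_swap_down[OF p i ne])
    show "inversions n (swap_down n i \<pi>) + 1 \<le> inversions n \<pi> + 0"
      using inversions_swap_down[OF p i ne] by simp
  next
    show "inj_on (swap_down n i) {\<pi>. \<pi> permutes {1..n} \<and> Suc t \<le> card (later_smaller n i \<pi>)}"
      by (rule inj_on_subset[OF inj_on_swap_down[OF i]]) auto
  qed
  also have "\<dots> \<le> q * (q ^ t * mallows_Z n q)"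
    using Suc q by (simp add: mult_left_mono)
  finally show ?case
    by simp
qed

lemma mallows_weight_displaced_right:
  assumes q: "0 < q" "q \<le> 1" and i: "i \<in> {1..n}"
  shows "mallows_weight n q (\<lambda>\<pi>. i + t \<le> \<pi> i) \<le> q ^ t * mallows_Z n q"
proof -
  have "mallows_weight n q (\<lambda>\<pi>. i + t \<le> \<pi> i)
      \<le> mallows_weight n q (\<lambda>\<pi>. t \<le> card (later_smaller n i \<pi>))"
    using q le_card_later_smaller[OF _ i] by (intro mallows_weight_mono) fastforce+
  also have "\<dots> \<le> q ^ t * mallows_Z n q"
    by (rule mallows_weight_later_smaller[OF q i])
  finally show ?thesis .
qed

definition reflect :: "nat \<Rightarrow> nat \<Rightarrow> nat" where
  "reflect n k = (if k \<in> {1..n} then n + 1 - k else k)"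

definition reverse_complement :: "nat \<Rightarrow> (nat \<Rightarrow> nat) \<Rightarrow> (nat \<Rightarrow> nat)" where
  "reverse_complement n \<pi> = reflect n \<circ> \<pi> \<circ> reflect n"

lemma reflect_reflect [simp]: "reflect n (reflect n k) = k"
  by (auto simp: reflect_def)

lemma reflect_permutes: "reflect n permutes {1..n}"
  unfolding permutes_def
proof (intro conjI allI impI)
  show "\<exists>!x. reflect n x = y" for y
    by (metis reflect_reflect)
qed (auto simp: reflect_def)

lemma reverse_complement_permutes: "\<pi> permutes {1..n} \<Longrightarrow> reverse_complement n \<pi> permutes {1..n}"
  unfolding reverse_complement_def
  by (intro permutes_compose[OF reflect_permutes] permutes_compose[OF _ reflect_permutes])

lemma reverse_complement_reverse_complement [simp]:
  "reverse_complement n (reverse_complement n \<pi>) = \<pi>"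
  by (simp add: reverse_complement_def fun_eq_iff)

lemma reverse_complement_apply:
  assumes "\<pi> permutes {1..n}" "k \<in> {1..n}"
  shows "reverse_complement n \<pi> (n + 1 - k) = n + 1 - \<pi> k"
  using assms permutes_in_image[OF assms(1), of k]
  by (auto simp: reverse_complement_def reflect_def)

lemma inversions_reverse_complement_ge:
  assumes p: "\<pi> permutes {1..n}"
  shows "inversions n \<pi> \<le> inversions n (reverse_complement n \<pi>)"
proof -
  let ?h = "\<lambda>(a, b). (n + 1 - b, n + 1 - a)"
  have "?h ` inversion_set n \<pi> \<subseteq> inversion_set n (reverse_complement n \<pi>)"
  proof clarify
    fix a b assume "(a, b) \<in> inversion_set n \<pi>"
    then have "a \<in> {1..n}" "b \<in> {1..n}" "a < b" "\<pi> b < \<pi> a" "\<pi> a \<in> {1..n}" "\<pi> b \<in> {1..n}"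
      using permutes_in_image[OF p] by (auto simp: inversion_set_def)
    moreover note reverse_complement_apply[OF p, of a] reverse_complement_apply[OF p, of b]
    ultimately show "(n + 1 - b, n + 1 - a) \<in> inversion_set n (reverse_complement n \<pi>)"
      by (auto simp: inversion_set_def)
  qed
  moreover have "inj_on ?h (inversion_set n \<pi>)"
    by (rule inj_onI) (auto simp: inversion_set_def)
  ultimately show ?thesis
    unfolding inversions_eq_card by (intro card_inj_on_le) auto
qed

lemma inversions_reverse_complement:
  "\<pi> permutes {1..n} \<Longrightarrow> inversions n (reverse_complement n \<pi>) = inversions n \<pi>"
  using inversions_reverse_complement_ge reverse_complement_permutes
  by (metis antisym reverse_complement_reverse_complement)

lemma mallows_weight_reverse_complement:
  "mallows_weight n q E = mallows_weight n q (\<lambda>\<pi>. E (reverse_complement n \<pi>))"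
  unfolding mallows_weight_def
proof (rule sum.reindex_bij_witness[of _ "reverse_complement n" "reverse_complement n"])
  fix \<pi> assume "\<pi> \<in> {\<pi>. \<pi> permutes {1..n} \<and> E \<pi>}"
  then show "reverse_complement n \<pi> \<in> {\<pi>. \<pi> permutes {1..n} \<and> E (reverse_complement n \<pi>)}"
    and "q ^ inversions n (reverse_complement n \<pi>) = q ^ inversions n \<pi>"
    by (simp_all add: reverse_complement_permutes inversions_reverse_complement del: One_nat_def)
next
  fix \<pi> assume "\<pi> \<in> {\<pi>. \<pi> permutes {1..n} \<and> E (reverse_complement n \<pi>)}"
  then show "reverse_complement n \<pi> \<in> {\<pi>. \<pi> permutes {1..n} \<and> E \<pi>}"
    by (simp add: reverse_complement_permutes del: One_nat_def)
qed simp_all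

lemma mallows_weight_displaced_left:
  assumes q: "0 < q" "q \<le> 1" and i: "i \<in> {1..n}"
  shows "mallows_weight n q (\<lambda>\<pi>. \<pi> i + t \<le> i) \<le> q ^ t * mallows_Z n q"
proof -
  let ?i = "n + 1 - i"
  have "mallows_weight n q (\<lambda>\<pi>. \<pi> i + t \<le> i)
      = mallows_weight n q (\<lambda>\<pi>. reverse_complement n \<pi> i + t \<le> i)"
    by (rule mallows_weight_reverse_complement)
  also have "\<dots> = mallows_weight n q (\<lambda>\<pi>. ?i + t \<le> \<pi> ?i)"
  proof (rule mallows_weight_cong)
    fix \<pi> assume p: "\<pi> permutes {1..n}"
    have "?i \<in> {1..n}" "n + 1 - ?i = i"
      using i by auto
    then show "(reverse_complement n \<pi> i + t \<le> i) = (?i + t \<le> \<pi> ?i)"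
      using reverse_complement_apply[OF p, of ?i] permutes_in_image[OF p, of ?i] i by simp arith
  qed
  also have "\<dots> \<le> q ^ t * mallows_Z n q"
    using i by (intro mallows_weight_displaced_right[OF q]) auto
  finally show ?thesis .
qed

definition move_up :: "nat \<Rightarrow> nat \<Rightarrow> nat \<Rightarrow> nat" where
  "move_up v k u = (if u = v then v + k else if v < u \<and> u \<le> v + k then u - 1 else u)"

definition move_down :: "nat \<Rightarrow> nat \<Rightarrow> nat \<Rightarrow> nat" where
  "move_down v k u = (if u = v + k then v else if v \<le> u \<and> u < v + k then u + 1 else u)"

lemma move_up_move_down [simp]: "move_up v k (move_down v k u) = u"
  by (auto simp: move_up_def move_down_def)

lemma move_down_move_up [simp]: "move_down v k (move_up v k u) = u"
  by (auto simp: move_up_def move_down_def)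

lemma move_up_eq_iff [simp]: "move_up v k a = move_up v k b \<longleftrightarrow> a = b"
  by (metis move_down_move_up)

lemma move_up_permutes:
  assumes "1 \<le> v" "v + k \<le> n"
  shows "move_up v k permutes {1..n}"
  unfolding permutes_def
proof (intro conjI allI impI)
  show "\<exists>!x. move_up v k x = y" for y
    by (metis move_up_move_down move_down_move_up)
qed (use assms in \<open>auto simp: move_up_def\<close>)

lemma move_down_permutes:
  assumes "1 \<le> v" "v + k \<le> n"
  shows "move_down v k permutes {1..n}"
  unfolding permutes_def
proof (intro conjI allI impI)
  show "\<exists>!x. move_down v k x = y" for y
    by (metis move_up_move_down move_down_move_up)
qed (use assms in \<open>auto simp: move_down_def\<close>)

lemma move_up_inverted:
  "a < b \<Longrightarrow> move_up v k b < move_up v k a \<Longrightarrow> a = v \<and> v < b \<and> b \<le> v + k"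
  unfolding move_up_def by (auto split: if_splits)

definition raise_at :: "nat \<Rightarrow> nat \<Rightarrow> (nat \<Rightarrow> nat) \<Rightarrow> (nat \<Rightarrow> nat)" where
  "raise_at i k \<pi> = move_up (\<pi> i) k \<circ> \<pi>"

definition lower_at :: "nat \<Rightarrow> nat \<Rightarrow> (nat \<Rightarrow> nat) \<Rightarrow> (nat \<Rightarrow> nat)" where
  "lower_at i k \<pi> = move_down (\<pi> i - k) k \<circ> \<pi>"

lemma raise_at_same: "raise_at i k \<pi> i = \<pi> i + k"
  by (simp add: raise_at_def move_up_def)

lemma lower_at_same: "k \<le> \<pi> i \<Longrightarrow> lower_at i k \<pi> i = \<pi> i - k"
  by (simp add: lower_at_def move_down_def)

lemma raise_at_permutes:
  "\<pi> permutes {1..n} \<Longrightarrow> i \<in> {1..n} \<Longrightarrow> \<pi> i + k \<le> n \<Longrightarrow> raise_at i k \<pi> permutes {1..n}"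
  unfolding raise_at_def
  by (intro permutes_compose move_up_permutes) (auto dest: permutes_in_image[of _ _ i])

lemma lower_at_permutes:
  "\<pi> permutes {1..n} \<Longrightarrow> i \<in> {1..n} \<Longrightarrow> k < \<pi> i \<Longrightarrow> lower_at i k \<pi> permutes {1..n}"
  unfolding lower_at_def
  by (intro permutes_compose move_down_permutes) (auto dest: permutes_in_image[of _ _ i])

lemma raise_at_lower_at: "k \<le> \<pi> i \<Longrightarrow> raise_at i k (lower_at i k \<pi>) = \<pi>"
  by (simp add: raise_at_def lower_at_same) (simp add: lower_at_def fun_eq_iff)

lemma lower_at_raise_at: "lower_at i k (raise_at i k \<pi>) = \<pi>"
  by (simp add: lower_at_def raise_at_same) (simp add: raise_at_def fun_eq_iff)

lemma inversions_raise_at: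
  assumes p: "\<pi> permutes {1..n}"
  shows "inversions n (raise_at i k \<pi>) \<le> inversions n \<pi> + k"
    and "inversions n \<pi> \<le> inversions n (raise_at i k \<pi>) + k"
proof -
  let ?v = "\<pi> i" and ?\<sigma> = "raise_at i k \<pi>"
  define B where "B = {b \<in> {1..n}. ?v < \<pi> b \<and> \<pi> b \<le> ?v + k}"
  have "card B \<le> card {?v<..?v + k}"
    unfolding B_def by (intro card_inj_on_le[OF permutes_inj_on[OF p]]) auto
  then have card_B: "card B \<le> k"
    by simp
  have changed: "a = i \<and> b \<in> B"
    if "a \<in> {1..n}" "b \<in> {1..n}" "\<pi> a < \<pi> b" "?\<sigma> b < ?\<sigma> a" for a b
    using move_up_inverted[of "\<pi> a" "\<pi> b" ?v k] that inj_eq[OF permutes_inj[OF p], of a i]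
    by (auto simp: raise_at_def B_def)
  have fin_B: "finite B"
    by (simp add: B_def)
  have sub_\<sigma>: "inversion_set n ?\<sigma> \<subseteq> inversion_set n \<pi> \<union> Pair i ` B"
  proof clarify
    fix a b assume ab: "(a, b) \<in> inversion_set n ?\<sigma>" "(a, b) \<notin> Pair i ` B"
    then have "\<pi> a \<noteq> \<pi> b"
      by (auto simp: inversion_set_def inj_eq[OF permutes_inj[OF p]])
    then show "(a, b) \<in> inversion_set n \<pi>"
      using ab changed[of a b] by (auto simp: inversion_set_def)
  qed
  have sub_\<pi>: "inversion_set n \<pi> \<subseteq> inversion_set n ?\<sigma> \<union> (\<lambda>a. (a, i)) ` B"
  proof clarify
    fix a b assume ab: "(a, b) \<in> inversion_set n \<pi>" "(a, b) \<notin> (\<lambda>a. (a, i)) ` B"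
    then have "?\<sigma> a \<noteq> ?\<sigma> b"
      by (auto simp: inversion_set_def raise_at_def inj_eq[OF permutes_inj[OF p]])
    then show "(a, b) \<in> inversion_set n ?\<sigma>"
      using ab changed[of b a] by (auto simp: inversion_set_def)
  qed
  have "inversions n ?\<sigma> \<le> card (inversion_set n \<pi> \<union> Pair i ` B)"
    unfolding inversions_eq_card using sub_\<sigma> fin_B by (intro card_mono) auto
  also have "\<dots> \<le> inversions n \<pi> + card (Pair i ` B)"
    unfolding inversions_eq_card by (rule card_Un_le)
  also have "\<dots> \<le> inversions n \<pi> + k"
    using card_image_le[OF fin_B, of "Pair i"] card_B by simp
  finally show "inversions n ?\<sigma> \<le> inversions n \<pi> + k" .
  have "inversions n \<pi> \<le> card (inversion_set n ?\<sigma> \<union> (\<lambda>a. (a, i)) ` B)"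
    unfolding inversions_eq_card using sub_\<pi> fin_B by (intro card_mono) auto
  also have "\<dots> \<le> inversions n ?\<sigma> + card ((\<lambda>a. (a, i)) ` B)"
    unfolding inversions_eq_card by (rule card_Un_le)
  also have "\<dots> \<le> inversions n ?\<sigma> + k"
    using card_image_le[OF fin_B, of "\<lambda>a. (a, i)"] card_B by simp
  finally show "inversions n \<pi> \<le> inversions n ?\<sigma> + k" .
qed

definition displacement :: "nat \<Rightarrow> (nat \<Rightarrow> nat) \<Rightarrow> nat" where
  "displacement i \<pi> = (if i \<le> \<pi> i then \<pi> i - i else i - \<pi> i)"

lemma le_displacement_iff: "t \<le> displacement i \<pi> \<longleftrightarrow> i + t \<le> \<pi> i \<or> \<pi> i + t \<le> i"
  by (auto simp: displacement_def)

lemma displacement_less_iff: "displacement i \<pi> < t \<longleftrightarrow> \<pi> i < i + t \<and> i < \<pi> i + t"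
  by (auto simp: displacement_def)

lemma abs_eq_displacement: "\<bar>real (\<pi> i) - real i\<bar> = real (displacement i \<pi>)"
  by (simp add: displacement_def of_nat_diff)

lemma displacement_le:
  "\<pi> permutes {1..n} \<Longrightarrow> i \<in> {1..n} \<Longrightarrow> displacement i \<pi> \<le> n - 1"
  using permutes_in_image[of \<pi> "{1..n}" i] by (auto simp: displacement_def)

lemma mallows_weight_disj_le:
  "0 \<le> q \<Longrightarrow> mallows_weight n q (\<lambda>\<pi>. E \<pi> \<or> F \<pi>) \<le> mallows_weight n q E + mallows_weight n q F"
proof -
  assume q: "0 \<le> q"
  have "mallows_weight n q (\<lambda>\<pi>. E \<pi> \<or> F \<pi>)
      = mallows_weight n q (\<lambda>\<pi>. (E \<pi> \<or> F \<pi>) \<and> E \<pi>) + mallows_weight n q (\<lambda>\<pi>. (E \<pi> \<or> F \<pi>) \<and> \<not> E \<pi>)"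
    by (rule mallows_weight_split)
  also have "\<dots> \<le> mallows_weight n q E + mallows_weight n q F"
    using q by (intro add_mono mallows_weight_mono) auto
  finally show ?thesis .
qed

lemma mallows_weight_displacement_ge:
  assumes q: "0 < q" "q \<le> 1" and i: "i \<in> {1..n}"
  shows "mallows_weight n q (\<lambda>\<pi>. t \<le> displacement i \<pi>) \<le> 2 * q ^ t * mallows_Z n q"
proof -
  have "mallows_weight n q (\<lambda>\<pi>. t \<le> displacement i \<pi>)
      \<le> mallows_weight n q (\<lambda>\<pi>. i + t \<le> \<pi> i) + mallows_weight n q (\<lambda>\<pi>. \<pi> i + t \<le> i)"
    unfolding le_displacement_iff using q by (intro mallows_weight_disj_le) simp
  also have "\<dots> \<le> q ^ t * mallows_Z n q + q ^ t * mallows_Z n q"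
    by (intro add_mono mallows_weight_displaced_right[OF q i] mallows_weight_displaced_left[OF q i])
  finally show ?thesis
    by (simp add: algebra_simps)
qed

lemma mallows_weight_displacement_ge_eq:
  assumes "1 \<le> t"
  shows "mallows_weight n q (\<lambda>\<pi>. t \<le> displacement i \<pi>)
    = mallows_weight n q (\<lambda>\<pi>. i + t \<le> \<pi> i) + mallows_weight n q (\<lambda>\<pi>. \<pi> i + t \<le> i)"
proof -
  have "mallows_weight n q (\<lambda>\<pi>. t \<le> displacement i \<pi> \<and> i + t \<le> \<pi> i)
      = mallows_weight n q (\<lambda>\<pi>. i + t \<le> \<pi> i)"
    and "mallows_weight n q (\<lambda>\<pi>. t \<le> displacement i \<pi> \<and> \<not> i + t \<le> \<pi> i)
      = mallows_weight n q (\<lambda>\<pi>. \<pi> i + t \<le> i)"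
    using assms by (auto intro!: mallows_weight_cong simp: le_displacement_iff)
  then show ?thesis
    using mallows_weight_split[of n q "\<lambda>\<pi>. t \<le> displacement i \<pi>" "\<lambda>\<pi>. i + t \<le> \<pi> i"]
    by simp
qed

lemma mallows_weight_displacement_less:
  assumes q: "0 < q" "q \<le> 1" and i: "i \<in> {1..n}" and t: "1 \<le> t" "2 * (2 * t - 1) \<le> n"
  shows "q ^ (2 * t - 1) * mallows_weight n q (\<lambda>\<pi>. displacement i \<pi> < t)
    \<le> mallows_weight n q (\<lambda>\<pi>. t \<le> displacement i \<pi>)"
proof -
  define k where "k = 2 * t - 1"
  let ?near = "\<lambda>\<pi>. displacement i \<pi> < t" and ?top = "\<lambda>\<pi>. \<pi> i + k \<le> n"
  have "q ^ k * mallows_weight n q (\<lambda>\<pi>. ?near \<pi> \<and> ?top \<pi>)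
      \<le> q ^ 0 * mallows_weight n q (\<lambda>\<pi>. i + t \<le> \<pi> i)"
  proof (rule mallows_weight_le_by_injection[OF q])
    fix \<pi> assume p: "\<pi> permutes {1..n}" and \<pi>: "?near \<pi> \<and> ?top \<pi>"
    then show "raise_at i k \<pi> permutes {1..n} \<and> i + t \<le> raise_at i k \<pi> i"
      using raise_at_permutes[OF p i] by (auto simp: raise_at_same k_def displacement_less_iff)
    show "inversions n (raise_at i k \<pi>) + 0 \<le> inversions n \<pi> + k"
      using inversions_raise_at(1)[OF p, of i k] by simp
  next
    show "inj_on (raise_at i k) {\<pi>. \<pi> permutes {1..n} \<and> ?near \<pi> \<and> ?top \<pi>}"
      by (rule inj_on_inverseI[where g = "lower_at i k"]) (rule lower_at_raise_at)
  qed
  moreover have "q ^ k * mallows_weight n q (\<lambda>\<pi>. ?near \<pi> \<and> \<not> ?top \<pi>)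
      \<le> q ^ 0 * mallows_weight n q (\<lambda>\<pi>. \<pi> i + t \<le> i)"
  proof (rule mallows_weight_le_by_injection[OF q])
    fix \<pi> assume p: "\<pi> permutes {1..n}" and \<pi>: "?near \<pi> \<and> \<not> ?top \<pi>"
    then have k: "k < \<pi> i"
      using t by (auto simp: k_def)
    have p': "lower_at i k \<pi> permutes {1..n}"
      by (rule lower_at_permutes[OF p i k])
    show "lower_at i k \<pi> permutes {1..n} \<and> lower_at i k \<pi> i + t \<le> i"
      using p' k \<pi> by (auto simp: lower_at_same k_def displacement_less_iff)
    show "inversions n (lower_at i k \<pi>) + 0 \<le> inversions n \<pi> + k"
      using inversions_raise_at(2)[OF p', of i k] raise_at_lower_at[of k \<pi> i] k by simp
  next
    have "k \<le> \<pi> i" if "\<not> ?top \<pi>" for \<pi>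
      using that t by (auto simp: k_def)
    then show "inj_on (lower_at i k) {\<pi>. \<pi> permutes {1..n} \<and> ?near \<pi> \<and> \<not> ?top \<pi>}"
      by (intro inj_on_inverseI[where g = "raise_at i k"] raise_at_lower_at) auto
  qed
  moreover have "mallows_weight n q ?near
      = mallows_weight n q (\<lambda>\<pi>. ?near \<pi> \<and> ?top \<pi>) + mallows_weight n q (\<lambda>\<pi>. ?near \<pi> \<and> \<not> ?top \<pi>)"
    by (rule mallows_weight_split)
  moreover note mallows_weight_displacement_ge_eq[OF t(1)]
  ultimately show ?thesis
    unfolding k_def[symmetric] by (simp add: distrib_left)
qed

lemma mallows_Z_pos: "0 < q \<Longrightarrow> 0 < mallows_Z n q"
  by (simp add: mallows_Z_eq_weight mallows_weight_pos)

lemma mallows_prob_nonneg: "0 < q \<Longrightarrow> 0 \<le> mallows_prob n q E"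
  by (simp add: mallows_prob_eq_weight mallows_weight_nonneg mallows_Z_pos less_imp_le)

lemma mallows_prob_le_1: "0 < q \<Longrightarrow> mallows_prob n q E \<le> 1"
  using mallows_weight_mono[of q n E "\<lambda>_. True"] mallows_Z_pos[of q n]
  by (simp add: mallows_prob_eq_weight mallows_Z_eq_weight)

lemma mallows_prob_displacement_ge_upper:
  assumes "0 < q" "q \<le> 1" "i \<in> {1..n}"
  shows "mallows_prob n q (\<lambda>\<pi>. t \<le> displacement i \<pi>) \<le> 2 * q ^ t"
  using mallows_weight_displacement_ge[OF assms, of t] mallows_Z_pos[of q n] assms(1)
  by (simp add: mallows_prob_eq_weight divide_le_eq)

lemma mallows_prob_displacement_ge_lower:
  assumes q: "0 < q" "q \<le> 1" and i: "i \<in> {1..n}" and t: "1 \<le> t" "2 * (2 * t - 1) \<le> n"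
  shows "q ^ (2 * t - 1) / 2 \<le> mallows_prob n q (\<lambda>\<pi>. t \<le> displacement i \<pi>)"
proof -
  let ?far = "mallows_weight n q (\<lambda>\<pi>. t \<le> displacement i \<pi>)"
  have "mallows_Z n q = ?far + mallows_weight n q (\<lambda>\<pi>. displacement i \<pi> < t)"
    using mallows_weight_split[of n q "\<lambda>_. True" "\<lambda>\<pi>. t \<le> displacement i \<pi>"]
    by (simp add: mallows_Z_eq_weight not_le)
  moreover have "q ^ (2 * t - 1) * ?far \<le> ?far"
    using q mallows_weight_nonneg[of q n] by (simp add: mult_left_le_one_le power_le_one)
  ultimately have "q ^ (2 * t - 1) * mallows_Z n q \<le> 2 * ?far"
    using mallows_weight_displacement_less[OF q i t] by (simp add: distrib_left)
  then show ?thesis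
    using mallows_Z_pos[of q n] q by (simp add: mallows_prob_eq_weight le_divide_eq)
qed

lemma mallows_prob_eq_sum_indicator:
  "mallows_prob n q E = (\<Sum>\<pi> | \<pi> permutes {1..n}. mallows n q \<pi> * (if E \<pi> then 1 else 0))"
proof -
  have "{\<pi>. \<pi> permutes {1..n} \<and> E \<pi>} = {\<pi> \<in> {\<pi>. \<pi> permutes {1..n}}. E \<pi>}"
    by auto
  then show ?thesis
    unfolding mallows_prob_def
    by (simp only: sum.inter_filter[OF finite_permutations[OF finite_atLeastAtMost]])
      (auto intro: sum.cong)
qed

lemma mallows_expect_eq_tail_sum:
  assumes "\<And>\<pi>. \<pi> permutes {1..n} \<Longrightarrow> X \<pi> \<le> N"
  shows "mallows_expect n q (\<lambda>\<pi>. real (X \<pi>)) = (\<Sum>t = 1..N. mallows_prob n q (\<lambda>\<pi>. t \<le> X \<pi>))"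
proof -
  have "real (X \<pi>) = (\<Sum>t = 1..N. if t \<le> X \<pi> then 1 else 0)" if "\<pi> permutes {1..n}" for \<pi>
  proof -
    have "{t \<in> {1..N}. t \<le> X \<pi>} = {1..X \<pi>}"
      using assms[OF that] by auto
    then show ?thesis
      by (simp add: sum.inter_filter[symmetric])
  qed
  then have "mallows_expect n q (\<lambda>\<pi>. real (X \<pi>))
      = (\<Sum>\<pi> | \<pi> permutes {1..n}. \<Sum>t = 1..N. mallows n q \<pi> * (if t \<le> X \<pi> then 1 else 0))"
    unfolding mallows_expect_def by (auto intro!: sum.cong simp: sum_distrib_left)
  also have "\<dots> = (\<Sum>t = 1..N. mallows_prob n q (\<lambda>\<pi>. t \<le> X \<pi>))"
    by (subst sum.swap) (simp add: mallows_prob_eq_sum_indicator)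
  finally show ?thesis .
qed

lemma mallows_expect_displacement:
  assumes "i \<in> {1..n}"
  shows "mallows_expect n q (\<lambda>\<pi>. real (displacement i \<pi>))
    = (\<Sum>t = 1..n - 1. mallows_prob n q (\<lambda>\<pi>. t \<le> displacement i \<pi>))"
  using displacement_le[OF _ assms] by (rule mallows_expect_eq_tail_sum)

lemma sum_power_le_geometric:
  fixes q :: real
  assumes "0 < q" "q < 1"
  shows "(\<Sum>t = 1..N. q ^ t) \<le> q / (1 - q)"
proof -
  have "(\<Sum>t = 1..N. q ^ t) = q * (\<Sum>t < N. q ^ t)"
    by (induction N) (auto simp: atLeastAtMostSuc_conv algebra_simps)
  also have "\<dots> \<le> q * (1 / (1 - q))"
    using geometric_sum_less[OF assms finite_lessThan, of N] assms
    by (intro mult_left_mono) auto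
  finally show ?thesis
    by simp
qed

lemma mallows_expect_displacement_upper:
  assumes q: "0 < q" "q < 1" and i: "i \<in> {1..n}"
  shows "mallows_expect n q (\<lambda>\<pi>. real (displacement i \<pi>)) \<le> min (2 * q / (1 - q)) (real n - 1)"
proof -
  let ?P = "\<lambda>t. mallows_prob n q (\<lambda>\<pi>. t \<le> displacement i \<pi>)"
  have "(\<Sum>t = 1..n - 1. ?P t) \<le> (\<Sum>t = 1..n - 1. 2 * q ^ t)"
    using q i by (intro sum_mono mallows_prob_displacement_ge_upper) auto
  also have "\<dots> \<le> 2 * q / (1 - q)"
    using sum_power_le_geometric[of q "n - 1"] q by (simp add: sum_distrib_left[symmetric])
  finally have "(\<Sum>t = 1..n - 1. ?P t) \<le> 2 * q / (1 - q)" .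
  moreover have "(\<Sum>t = 1..n - 1. ?P t) \<le> (\<Sum>t = 1..n - 1. 1)"
    using q by (intro sum_mono mallows_prob_le_1) auto
  ultimately show ?thesis
    using i by (simp add: mallows_expect_displacement of_nat_diff)
qed

lemma mallows_expect_displacement_ge_cutoff:
  assumes q: "0 < q" "q \<le> 1" and i: "i \<in> {1..n}" and T: "1 \<le> T" "2 * (2 * T - 1) \<le> n"
  shows "real T * q ^ (2 * T - 1) / 2 \<le> mallows_expect n q (\<lambda>\<pi>. real (displacement i \<pi>))"
proof -
  let ?P = "\<lambda>t. mallows_prob n q (\<lambda>\<pi>. t \<le> displacement i \<pi>)"
  have "real T * q ^ (2 * T - 1) / 2 = (\<Sum>t = 1..T. q ^ (2 * T - 1) / 2)"
    by simp
  also have "\<dots> \<le> (\<Sum>t = 1..T. ?P t)"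
  proof (rule sum_mono)
    fix t assume t: "t \<in> {1..T}"
    then have "q ^ (2 * T - 1) / 2 \<le> q ^ (2 * t - 1) / 2"
      using q by (intro divide_right_mono power_decreasing) auto
    also have "\<dots> \<le> ?P t"
      using t T by (intro mallows_prob_displacement_ge_lower[OF q i]) auto
    finally show "q ^ (2 * T - 1) / 2 \<le> ?P t" .
  qed
  also have "\<dots> \<le> (\<Sum>t = 1..n - 1. ?P t)"
    using T q by (intro sum_mono2 mallows_prob_nonneg) auto
  finally show ?thesis
    by (simp add: mallows_expect_displacement[OF i])
qed

lemma exists_cutoff_for_expect_lower:
  fixes q :: real
  assumes q: "0 < q" "q < 1" and n: "2 \<le> n"
  obtains T where "1 \<le> T" "2 * (2 * T - 1) \<le> n"
    "min (q / (1 - q)) (real n - 1) \<le> 16 * (real T * q ^ (2 * T - 1))"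
proof (cases "q \<le> 3 / 4")
  case True
  then have "q / (1 - q) \<le> 16 * q"
    using q by (simp add: divide_le_eq)
  then show ?thesis
    using n by (intro that[of 1]) auto
next
  case False
  define x where "x = 1 / (4 * (1 - q))"
  define T where "T = min (nat \<lfloor>x\<rfloor>) ((n + 2) div 4)"
  have "1 < x"
    using False q by (simp add: x_def field_simps)
  then have T: "1 \<le> T" "2 * (2 * T - 1) \<le> n"
    using n by (auto simp: T_def le_nat_floor)
  have "real T \<le> real (nat \<lfloor>x\<rfloor>)"
    by (simp add: T_def)
  also have "\<dots> \<le> x"
    using \<open>1 < x\<close> by (intro of_nat_floor) auto
  finally have "real T \<le> x" .
  have "1 / 2 \<le> 1 + real (2 * T - 1) * (q - 1)"
  proof -
    have "real (2 * T - 1) * (1 - q) \<le> 2 * x * (1 - q)"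
      using T \<open>real T \<le> x\<close> q by (intro mult_right_mono) auto
    also have "\<dots> = 1 / 2"
      using q by (simp add: x_def)
    finally show ?thesis
      by (simp add: algebra_simps)
  qed
  also have "\<dots> \<le> q ^ (2 * T - 1)"
    using Bernoulli_inequality[of "q - 1" "2 * T - 1"] q by simp
  finally have half: "1 / 2 \<le> q ^ (2 * T - 1)" .
  have "min (q / (1 - q)) (real n - 1) \<le> 8 * real T"
  proof (cases "nat \<lfloor>x\<rfloor> \<le> (n + 2) div 4")
    case True
    have "q / (1 - q) \<le> 1 / (1 - q)"
      using q by (intro divide_right_mono) auto
    also have "\<dots> = 4 * x"
      using q by (simp add: x_def field_simps)
    also have "\<dots> \<le> 8 * real T"
    proof -
      have "real T = real_of_int \<lfloor>x\<rfloor>" "x < real_of_int \<lfloor>x\<rfloor> + 1" "1 \<le> real_of_int \<lfloor>x\<rfloor>"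
        using True \<open>1 < x\<close> by (simp_all add: T_def)
      then show ?thesis
        by linarith
    qed
    finally show ?thesis
      by linarith
  next
    case False
    then have "real n - 1 \<le> 8 * real T"
      by (simp add: T_def)
    then show ?thesis
      by linarith
  qed
  also have "\<dots> \<le> 16 * (real T * q ^ (2 * T - 1))"
    using mult_left_mono[OF half, of "16 * real T"] by simp
  finally show ?thesis
    using T by (intro that[of T])
qed

lemma mallows_expect_displacement_lower:
  assumes q: "0 < q" "q < 1" and i: "i \<in> {1..n}"
  shows "min (q / (1 - q)) (real n - 1) / 32 \<le> mallows_expect n q (\<lambda>\<pi>. real (displacement i \<pi>))"
proof (cases "n = 1")
  case True
  then show ?thesis
    using mallows_expect_displacement[OF i] by simp
next
  case False
  then have "2 \<le> n"
    using i by auto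
  then obtain T where T: "1 \<le> T" "2 * (2 * T - 1) \<le> n"
    and bound: "min (q / (1 - q)) (real n - 1) \<le> 16 * (real T * q ^ (2 * T - 1))"
    by (rule exists_cutoff_for_expect_lower[OF q])
  show ?thesis
    using mallows_expect_displacement_ge_cutoff[OF q(1) _ i T] bound q by simp
qed

theorem theorem1p1:
  shows "\<exists>c>0. \<forall>(q::real) (n::nat) (i::nat).
     0 < q \<and> q < 1 \<and> 1 \<le> n \<and> 1 \<le> i \<and> i \<le> n \<longrightarrow>
       (\<forall>t::nat. t \<ge> 1 \<longrightarrow>
          mallows_prob n q (\<lambda>\<pi>. \<bar>real (\<pi> i) - real i\<bar> \<ge> real t) \<le> 2 * q ^ t)
     \<and> c * min (q / (1 - q)) (real n - 1) \<le> mallows_expect n q (\<lambda>\<pi>. \<bar>real (\<pi> i) - real i\<bar>)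
     \<and> mallows_expect n q (\<lambda>\<pi>. \<bar>real (\<pi> i) - real i\<bar>) \<le> min (2 * q / (1 - q)) (real n - 1)
     \<and> (n \<ge> 3 \<longrightarrow> (\<forall>t::nat. 1 \<le> t \<and> real t \<le> (real n + 5) / 8 \<longrightarrow>
          mallows_prob n q (\<lambda>\<pi>. \<bar>real (\<pi> i) - real i\<bar> \<ge> real t) \<ge> q ^ (2 * t - 1) / 2))"
proof -
  have "2 * (2 * t - 1) \<le> n" if "3 \<le> n" "real t \<le> (real n + 5) / 8" for n t :: nat
  proof -
    have "real (8 * t) \<le> real (n + 5)"
      using that(2) by simp
    then show ?thesis
      using that(1) unfolding of_nat_le_iff by linarith
  qed
  then show ?thesis
    unfolding abs_eq_displacement of_nat_le_iff
    using mallows_prob_displacement_ge_upper mallows_expect_displacement_lower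
      mallows_expect_displacement_upper mallows_prob_displacement_ge_lower
    by (intro exI[of _ "1 / 32"]) auto
qed

end
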